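(* Let $K$ be a field of characteristic $0$ with henselian valuation ring $A$, valuation $v$ and residue field of characteristic $p>0$, containing a primitive $p$-th root of unity $\zeta$; put $\mathfrak{z}=\zeta-1$. Let $L|K$ be a non-trivial defectless Kummer extension of degree $p$ and $h$ a best element. Then the ideal $\mathbb{I}'$ of $A$ generated by $\{p\frac{a-1}{h-1}: a\in A,\ a^ph \text{ is best}\}$ is contained in $\mathbb{I}=\{x\in K: v(x)\ge\frac{p-1}{p}v(\frac{\mathfrak{z}^p}{h-1})\}$.
   Context: $\mathfrak{A}$ is the set of $g\in K$ such that the solutions of $X^p=g$ generate $L$; $g\in\mathfrak{A}$ is best if $v(\mathfrak{z}^p/(g-1))=\inf_{g'\in\mathfrak{A}}v(\mathfrak{z}^p/(g'-1))$. Defectless means $p=ef$ with $e$ the ramification index and $f$ the residue degree of $L|K$. *)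

theory Defs
  imports "HOL-Computational_Algebra.Polynomial"
begin

text \<open>Setting: the extension field L is the whole type 'l (char 0); the base field K is a
  subfield of it, given as a set. The valuation v is a Krull valuation on L (the unique
  extension of the henselian valuation of K), with values in an ordered abelian group;
  v 0 is irrelevant (formally v 0 plays the role of infinity and is always treated
  separately).\<close>

definition subfield :: "'a::field set \<Rightarrow> bool" where
  "subfield F \<longleftrightarrow> 0 \<in> F \<and> 1 \<in> F \<and>
     (\<forall>x\<in>F. \<forall>y\<in>F. x + y \<in> F \<and> x * y \<in> F) \<and>
     (\<forall>x\<in>F. - x \<in> F \<and> inverse x \<in> F)"

definition gen_field :: "'a::field set \<Rightarrow> 'a set \<Rightarrow> 'a set" where
  "gen_field F S = \<Inter> {E. subfield E \<and> F \<subseteq> E \<and> S \<subseteq> E}"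

definition valuation :: "('a::field \<Rightarrow> 'g::linordered_ab_group_add) \<Rightarrow> bool" where
  "valuation v \<longleftrightarrow>
     (\<forall>x y. x \<noteq> 0 \<longrightarrow> y \<noteq> 0 \<longrightarrow> v (x * y) = v x + v y) \<and>
     (\<forall>x y. x \<noteq> 0 \<longrightarrow> y \<noteq> 0 \<longrightarrow> x + y \<noteq> 0 \<longrightarrow> min (v x) (v y) \<le> v (x + y))"

definition val_int :: "('a::field \<Rightarrow> 'g::linordered_ab_group_add) \<Rightarrow> 'a \<Rightarrow> bool" where
  "val_int v x \<longleftrightarrow> x = 0 \<or> 0 \<le> v x"

definition val_pos :: "('a::field \<Rightarrow> 'g::linordered_ab_group_add) \<Rightarrow> 'a \<Rightarrow> bool" where
  "val_pos v x \<longleftrightarrow> x = 0 \<or> 0 < v x"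

definition val_ring :: "'a::field set \<Rightarrow> ('a \<Rightarrow> 'g::linordered_ab_group_add) \<Rightarrow> 'a set" where
  "val_ring K v = {x \<in> K. val_int v x}"

definition henselian :: "'a::field set \<Rightarrow> ('a \<Rightarrow> 'g::linordered_ab_group_add) \<Rightarrow> bool" where
  "henselian K v \<longleftrightarrow>
     (\<forall>f a. (\<forall>i. coeff f i \<in> val_ring K v) \<longrightarrow> lead_coeff f = 1 \<longrightarrow>
        a \<in> val_ring K v \<longrightarrow> val_pos v (poly f a) \<longrightarrow> \<not> val_pos v (poly (pderiv f) a) \<longrightarrow>
        (\<exists>b \<in> val_ring K v. poly f b = 0 \<and> val_pos v (b - a)))"

definition primitive_root :: "nat \<Rightarrow> 'a::field \<Rightarrow> bool" where
  "primitive_root p z \<longleftrightarrow> z ^ p = 1 \<and> (\<forall>k. 0 < k \<and> k < p \<longrightarrow> z ^ k \<noteq> 1)"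

definition indep_over :: "'a::field set \<Rightarrow> 'a list \<Rightarrow> bool" where
  "indep_over K xs \<longleftrightarrow>
     (\<forall>c. (\<forall>i<length xs. c i \<in> K) \<longrightarrow> (\<Sum>i<length xs. c i * xs ! i) = 0 \<longrightarrow>
          (\<forall>i<length xs. c i = 0))"

definition ext_degree_is :: "'a::field set \<Rightarrow> nat \<Rightarrow> bool" where
  "ext_degree_is K n \<longleftrightarrow>
     (\<exists>xs. length xs = n \<and> indep_over K xs) \<and> (\<forall>xs. indep_over K xs \<longrightarrow> length xs \<le> n)"

definition value_group :: "'a::field set \<Rightarrow> ('a \<Rightarrow> 'g::linordered_ab_group_add) \<Rightarrow> 'g set" where
  "value_group F v = v ` (F - {0})"

definition ram_index_is :: "'a::field set \<Rightarrow> ('a \<Rightarrow> 'g::linordered_ab_group_add) \<Rightarrow> nat \<Rightarrow> bool" where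
  "ram_index_is K v e \<longleftrightarrow>
     (let cosets = (\<lambda>\<gamma>. (\<lambda>\<delta>. \<gamma> + \<delta>) ` value_group K v) ` value_group UNIV v
      in finite cosets \<and> card cosets = e)"

text \<open>Residues of elements xs of the valuation ring of L are linearly independent over the
  residue field Kv (residues of elements c of the valuation ring of K).\<close>
definition res_indep :: "'a::field set \<Rightarrow> ('a \<Rightarrow> 'g::linordered_ab_group_add) \<Rightarrow> 'a list \<Rightarrow> bool" where
  "res_indep K v xs \<longleftrightarrow> (\<forall>i<length xs. val_int v (xs ! i)) \<and>
     (\<forall>c. (\<forall>i<length xs. c i \<in> val_ring K v) \<longrightarrow> val_pos v (\<Sum>i<length xs. c i * xs ! i) \<longrightarrow>
          (\<forall>i<length xs. val_pos v (c i)))"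

definition res_degree_is :: "'a::field set \<Rightarrow> ('a \<Rightarrow> 'g::linordered_ab_group_add) \<Rightarrow> nat \<Rightarrow> bool" where
  "res_degree_is K v f \<longleftrightarrow>
     (\<exists>xs. length xs = f \<and> res_indep K v xs) \<and> (\<forall>xs. res_indep K v xs \<longrightarrow> length xs \<le> f)"

definition defectless :: "'a::field set \<Rightarrow> ('a \<Rightarrow> 'g::linordered_ab_group_add) \<Rightarrow> nat \<Rightarrow> bool" where
  "defectless K v n \<longleftrightarrow> (\<exists>e f. ram_index_is K v e \<and> res_degree_is K v f \<and> n = e * f)"

definition frakA :: "'a::field set \<Rightarrow> nat \<Rightarrow> 'a set" where
  "frakA K p = {g \<in> K. gen_field K {x. x ^ p = g} = UNIV}"

definition best :: "'a::field set \<Rightarrow> ('a \<Rightarrow> 'g::linordered_ab_group_add) \<Rightarrow> nat \<Rightarrow> 'a \<Rightarrow> 'a \<Rightarrow> bool" where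
  "best K v p z g \<longleftrightarrow> g \<in> frakA K p \<and>
     (\<forall>g' \<in> frakA K p. v (z ^ p / (g - 1)) \<le> v (z ^ p / (g' - 1)))"

definition ideal_gen :: "'a::field set \<Rightarrow> 'a set \<Rightarrow> 'a set" where
  "ideal_gen A S = {\<Sum>i<n. c i * s i | (n::nat) c s. \<forall>i<n. c i \<in> A \<and> s i \<in> S}"

primrec nsm :: "nat \<Rightarrow> 'g::linordered_ab_group_add \<Rightarrow> 'g" where
  "nsm 0 g = 0"
| "nsm (Suc n) g = g + nsm n g"

end

theory Submission
  imports Defs "HOL-Computational_Algebra.Primes"
begin

text \<open>Let \<open>a \<in> A\<close> with \<open>a\<^sup>p h\<close> best. As \<open>h\<close> is best too, \<open>v (a\<^sup>p h - 1) = v (h - 1)\<close>, and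
  since \<open>v p = (p - 1) v \<zz>\<close> the required bound on \<open>p (a - 1) / (h - 1)\<close> amounts to
  \<open>v (h - 1) \<le> p v (a - 1)\<close>. If that failed, then either \<open>v (a - 1) < v \<zz>\<close>, the binomial
  expansion gives \<open>v (a\<^sup>p - 1) = p v (a - 1) < v (h - 1)\<close> and hence
  \<open>v (a\<^sup>p h - 1) = p v (a - 1)\<close>, a contradiction; or \<open>v (h - 1) > p v \<zz>\<close>, and Hensel's lemma
  makes \<open>h\<close> a \<open>p\<close>-th power in \<open>K\<close>, contradicting \<open>h \<in> \<AA>\<close>. The bound is stable under sums
  and multiplication by \<open>A\<close>, so it holds on the whole ideal.\<close>

section \<open>Multiples in ordered abelian groups\<close>

lemma nsm_zero [simp]: "nsm n (0::'g::linordered_ab_group_add) = 0"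
  by (induction n) simp_all

lemma nsm_add: "nsm n (x + y) = nsm n x + nsm n (y::'g::linordered_ab_group_add)"
  by (induction n) (simp_all add: algebra_simps)

lemma nsm_diff: "nsm n (x - y) = nsm n x - nsm n (y::'g::linordered_ab_group_add)"
  by (induction n) (simp_all add: algebra_simps)

lemma nsm_add_nat: "nsm (m + n) x = nsm m x + nsm n (x::'g::linordered_ab_group_add)"
  by (induction m) (simp_all add: algebra_simps)

lemma nsm_mult_nat: "nsm (m * n) x = nsm m (nsm n (x::'g::linordered_ab_group_add))"
  by (induction m) (simp_all add: nsm_add_nat)

lemma nsm_pred: "0 < n \<Longrightarrow> nsm n x = x + nsm (n - 1) (x::'g::linordered_ab_group_add)"
  by (cases n) simp_all

lemma nsm_mono: "x \<le> y \<Longrightarrow> nsm n x \<le> nsm n (y::'g::linordered_ab_group_add)"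
  by (induction n) (simp_all add: add_mono)

lemma nsm_strict_mono: "x < y \<Longrightarrow> 0 < n \<Longrightarrow> nsm n x < nsm n (y::'g::linordered_ab_group_add)"
proof (induction n)
  case (Suc n)
  then show ?case by (cases n) (auto intro: add_less_le_mono nsm_mono)
qed simp

lemma nsm_mono_nat: "0 \<le> x \<Longrightarrow> m \<le> n \<Longrightarrow> nsm m x \<le> nsm n (x::'g::linordered_ab_group_add)"
proof (induction n)
  case (Suc n)
  then show ?case by (cases "m = Suc n") (auto intro: add_increasing)
qed simp

lemma nsm_eq_0_iff: "0 < n \<Longrightarrow> nsm n x = 0 \<longleftrightarrow> x = (0::'g::linordered_ab_group_add)"
  using nsm_strict_mono[of x 0 n] nsm_strict_mono[of 0 x n] by (cases x "0::'g" rule: linorder_cases) auto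

lemma nsm_quotient_bound:
  fixes c d w :: "'g::linordered_ab_group_add"
  assumes "0 < p" and "w \<le> nsm p d"
  shows "nsm (p - 1) (nsm p c - w) \<le> nsm p (nsm (p - 1) c + d - w)"
proof -
  have "nsm p (nsm (p - 1) c) = nsm (p - 1) (nsm p c)"
    by (metis mult.commute nsm_mult_nat)
  then show ?thesis
    using assms nsm_pred[OF assms(1), of w] by (simp add: nsm_diff nsm_add algebra_simps)
qed

section \<open>Subfields, ideals and roots of unity\<close>

lemma ideal_gen_subset:
  assumes zero: "0 \<in> T" and add: "\<And>x y. x \<in> T \<Longrightarrow> y \<in> T \<Longrightarrow> x + y \<in> T"
    and mult: "\<And>c x. c \<in> A \<Longrightarrow> x \<in> T \<Longrightarrow> c * x \<in> T" and "S \<subseteq> T"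
  shows "ideal_gen A S \<subseteq> T"
proof
  fix x assume "x \<in> ideal_gen A S"
  then obtain n :: nat and c s where x: "x = (\<Sum>i<n. c i * s i)" and cs: "\<forall>i<n. c i \<in> A \<and> s i \<in> S"
    unfolding ideal_gen_def by (simp only: mem_Collect_eq) blast
  have "(\<Sum>i<m. c i * s i) \<in> T" if "m \<le> n" for m
    using that
  proof (induction m)
    case (Suc m)
    then have "m < n" by simp
    then have "c m * s m \<in> T" using mult cs \<open>S \<subseteq> T\<close> by blast
    with Suc show ?case using add by simp
  qed (simp add: zero)
  then show "x \<in> T" using x by simp
qed

lemma subfield_0: "subfield K \<Longrightarrow> 0 \<in> K"
  and subfield_1: "subfield K \<Longrightarrow> 1 \<in> K"
  and subfield_add: "subfield K \<Longrightarrow> x \<in> K \<Longrightarrow> y \<in> K \<Longrightarrow> x + y \<in> K"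
  and subfield_mult: "subfield K \<Longrightarrow> x \<in> K \<Longrightarrow> y \<in> K \<Longrightarrow> x * y \<in> K"
  and subfield_uminus: "subfield K \<Longrightarrow> x \<in> K \<Longrightarrow> - x \<in> K"
  and subfield_inverse: "subfield K \<Longrightarrow> x \<in> K \<Longrightarrow> inverse x \<in> K"
  unfolding subfield_def by auto

lemma subfield_diff: "subfield K \<Longrightarrow> x \<in> K \<Longrightarrow> y \<in> K \<Longrightarrow> x - y \<in> K"
  using subfield_add[of K x "- y"] subfield_uminus[of K y] by simp

lemma subfield_divide: "subfield K \<Longrightarrow> x \<in> K \<Longrightarrow> y \<in> K \<Longrightarrow> x / y \<in> K"
  using subfield_mult[of K x "inverse y"] subfield_inverse[of K y] by (simp add: divide_inverse)

lemma subfield_power: "subfield K \<Longrightarrow> x \<in> K \<Longrightarrow> x ^ n \<in> K"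
  by (induction n) (auto intro: subfield_1 subfield_mult)

lemma subfield_of_nat: "subfield K \<Longrightarrow> of_nat n \<in> K"
  by (induction n) (auto intro: subfield_0 subfield_1 subfield_add)

lemmas subfield_closed = subfield_0 subfield_1 subfield_add subfield_mult subfield_diff
  subfield_divide subfield_power subfield_of_nat

lemma indep_over_UNIV_length:
  assumes ind: "indep_over (UNIV :: 'a::field set) xs"
  shows "length xs \<le> 1"
proof (rule ccontr)
  assume "\<not> length xs \<le> 1"
  then have l: "1 < length xs" by simp
  have two: "(\<Sum>i<length xs. c i * xs ! i) = c 0 * xs ! 0 + c 1 * xs ! 1"
    if "\<forall>i>1. c i = 0" for c :: "nat \<Rightarrow> 'a"
  proof -
    have "(\<Sum>i<length xs. c i * xs ! i) = (\<Sum>i\<in>{0, 1}. c i * xs ! i)"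
      using l that by (intro sum.mono_neutral_right) auto
    then show ?thesis by simp
  qed
  have trivial: "c 0 = 0 \<and> c 1 = 0"
    if "\<forall>i>1. c i = 0" and "c 0 * xs ! 0 + c 1 * xs ! 1 = 0" for c :: "nat \<Rightarrow> 'a"
  proof -
    have "(\<Sum>i<length xs. c i * xs ! i) = 0" using two[OF that(1)] that(2) by simp
    then have "\<forall>i<length xs. c i = 0" using ind unfolding indep_over_def by blast
    then show ?thesis using l by (metis One_nat_def Suc_lessD)
  qed
  show False
  proof (cases "xs ! 0 = 0")
    case True
    then show False using trivial[of "\<lambda>i. if i = 0 then 1 else 0"] by simp
  next
    case False
    then show False using trivial[of "\<lambda>i. if i = 0 then xs ! 1 else if i = 1 then - xs ! 0 else 0"]
      by (simp add: mult.commute)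
  qed
qed

lemma ext_degree_proper: "ext_degree_is K n \<Longrightarrow> 2 \<le> n \<Longrightarrow> K \<noteq> UNIV"
  using indep_over_UNIV_length unfolding ext_degree_is_def by force

lemma primitive_root_nonzero: "primitive_root p \<zeta> \<Longrightarrow> 0 < p \<Longrightarrow> \<zeta> \<noteq> 0"
  unfolding primitive_root_def by (auto simp: power_0_left)

lemma inj_on_primitive_root_power:
  assumes "primitive_root p \<zeta>"
  shows "inj_on (\<lambda>i. \<zeta> ^ i) {..<p}"
proof (rule linorder_inj_onI')
  fix i j assume "i \<in> {..<p}" "j \<in> {..<p}" "i < j"
  moreover have "\<zeta> ^ j = \<zeta> ^ i * \<zeta> ^ (j - i)"
    using \<open>i < j\<close> by (simp flip: power_add)
  ultimately show "\<zeta> ^ i \<noteq> \<zeta> ^ j"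
    using assms primitive_root_nonzero[OF assms] unfolding primitive_root_def by auto
qed

lemma root_of_unity_is_primitive_root_power:
  fixes \<zeta> :: "'a::field"
  assumes pr: "primitive_root p \<zeta>" and "0 < p" and "x ^ p = 1"
  shows "\<exists>i<p. x = \<zeta> ^ i"
proof -
  define q :: "'a poly" where "q = monom 1 p - 1"
  have poly_q: "poly q y = y ^ p - 1" for y
    by (simp add: q_def poly_monom)
  have "coeff q p = 1" using \<open>0 < p\<close> by (simp add: q_def)
  then have "q \<noteq> 0" by auto
  have "degree q \<le> p"
    unfolding q_def by (rule order.trans[OF degree_diff_le]) (auto simp: degree_monom_le)
  let ?R = "{y. poly q y = 0}"
  have fin: "finite ?R" and "card ?R \<le> p"
    using poly_roots_finite[OF \<open>q \<noteq> 0\<close>] card_poly_roots_bound[OF \<open>q \<noteq> 0\<close>] \<open>degree q \<le> p\<close> by auto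
  have "(\<zeta> ^ i) ^ p = (\<zeta> ^ p) ^ i" for i
    by (simp flip: power_mult add: mult.commute)
  then have sub: "(\<lambda>i. \<zeta> ^ i) ` {..<p} \<subseteq> ?R"
    using pr by (auto simp: poly_q primitive_root_def)
  have "card ((\<lambda>i. \<zeta> ^ i) ` {..<p}) = p"
    using card_image[OF inj_on_primitive_root_power[OF pr]] by simp
  then have "(\<lambda>i. \<zeta> ^ i) ` {..<p} = ?R"
    using card_subset_eq[OF fin sub] card_mono[OF fin sub] \<open>card ?R \<le> p\<close> by simp
  moreover have "x \<in> ?R" using \<open>x ^ p = 1\<close> poly_q by simp
  ultimately show ?thesis by auto
qed

text \<open>If \<open>K\<close> contains the \<open>p\<close>-th roots of unity, all \<open>p\<close>-th roots of a \<open>p\<close>-th power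
  in \<open>K\<close> lie in \<open>K\<close> and so cannot generate the proper extension.\<close>
lemma power_notin_frakA:
  assumes K: "subfield K" and pr: "primitive_root p \<zeta>" and "\<zeta> \<in> K"
    and deg: "ext_degree_is K p" and "2 \<le> p" and "X \<in> K"
  shows "X ^ p \<notin> frakA K p"
proof
  assume "X ^ p \<in> frakA K p"
  then have gen: "gen_field K {x. x ^ p = X ^ p} = UNIV" unfolding frakA_def by simp
  have "x \<in> K" if "x ^ p = X ^ p" for x
  proof (cases "X = 0")
    case True
    then show ?thesis using that \<open>2 \<le> p\<close> subfield_0[OF K] by (simp add: power_0_left)
  next
    case False
    have "(x / X) ^ p = 1" using that False by (simp add: power_divide)
    then obtain i where "x / X = \<zeta> ^ i"
      using root_of_unity_is_primitive_root_power[OF pr] \<open>2 \<le> p\<close> by fastforce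
    then have "x = X * \<zeta> ^ i" using False by (simp add: field_simps)
    then show ?thesis using K \<open>\<zeta> \<in> K\<close> \<open>X \<in> K\<close> by (simp add: subfield_closed)
  qed
  then have "gen_field K {x. x ^ p = X ^ p} \<subseteq> K"
    unfolding gen_field_def using K by blast
  then show False using gen ext_degree_proper[OF deg \<open>2 \<le> p\<close>] by auto
qed

lemma binomial_minus_one:
  fixes y :: "'a::comm_ring_1"
  shows "(y + 1) ^ n - 1 = (\<Sum>k\<in>{1..n}. of_nat (n choose k) * y ^ k)"
proof -
  have "{..n} = insert 0 {1..n}" by auto
  then show ?thesis by (simp add: binomial_ring)
qed

locale valued_field =
  fixes v :: "'a::field \<Rightarrow> 'g::linordered_ab_group_add"
  assumes valuation: "valuation v"
begin

lemma val_mult: "x \<noteq> 0 \<Longrightarrow> y \<noteq> 0 \<Longrightarrow> v (x * y) = v x + v y"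
  using valuation unfolding valuation_def by blast

lemma val_add_min: "x \<noteq> 0 \<Longrightarrow> y \<noteq> 0 \<Longrightarrow> x + y \<noteq> 0 \<Longrightarrow> min (v x) (v y) \<le> v (x + y)"
  using valuation unfolding valuation_def by blast

lemma val_one [simp]: "v 1 = 0"
  using val_mult[of 1 1] by simp

lemma val_power: "x \<noteq> 0 \<Longrightarrow> v (x ^ n) = nsm n (v x)"
  by (induction n) (simp_all add: val_mult)

lemma val_minus_one [simp]: "v (- 1) = 0"
proof -
  have "nsm 2 (v (- 1)) = 0"
    using val_power[of "- 1" 2] by simp
  then show ?thesis
    using nsm_eq_0_iff[of 2 "v (- 1)"] by (metis zero_less_numeral)
qed

lemma val_minus [simp]: "v (- x) = v x"
  using val_mult[of "- 1" x] by (cases "x = 0") simp_all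

lemma val_inverse: "x \<noteq> 0 \<Longrightarrow> v (inverse x) = - v x"
  using val_mult[of x "inverse x"] by (simp add: eq_neg_iff_add_eq_0 add.commute)

lemma val_divide: "x \<noteq> 0 \<Longrightarrow> y \<noteq> 0 \<Longrightarrow> v (x / y) = v x - v y"
  by (simp add: divide_inverse val_mult val_inverse)

definition val_ge :: "'g \<Rightarrow> 'a \<Rightarrow> bool" where
  "val_ge g x \<longleftrightarrow> x = 0 \<or> g \<le> v x"

lemma val_ge_0 [simp]: "val_ge g 0"
  by (simp add: val_ge_def)

lemma val_ge_val [simp]: "val_ge (v x) x"
  by (simp add: val_ge_def)

lemma val_ge_mono: "val_ge g x \<Longrightarrow> g' \<le> g \<Longrightarrow> val_ge g' x"
  unfolding val_ge_def by auto

lemma val_ge_uminus: "val_ge g x \<Longrightarrow> val_ge g (- x)"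
  unfolding val_ge_def by simp

lemma val_ge_add:
  assumes "val_ge g x" and "val_ge g y"
  shows "val_ge g (x + y)"
proof (cases "x = 0 \<or> y = 0 \<or> x + y = 0")
  case False
  then have "min (v x) (v y) \<le> v (x + y)" by (simp add: val_add_min)
  with assms False show ?thesis by (auto simp: val_ge_def min_def split: if_splits)
qed (use assms in auto)

lemma val_ge_mult: "val_ge g x \<Longrightarrow> val_ge g' y \<Longrightarrow> val_ge (g + g') (x * y)"
  unfolding val_ge_def using val_mult[of x y] by (cases "x = 0 \<or> y = 0") (auto intro: add_mono)

lemma val_ge_sum: "(\<And>i. i \<in> S \<Longrightarrow> val_ge g (f i)) \<Longrightarrow> val_ge g (\<Sum>i\<in>S. f i)"
  by (induction S rule: infinite_finite_induct) (simp_all add: val_ge_add)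

lemma val_ge_of_nat: "val_ge 0 (of_nat n)"
proof (induction n)
  case (Suc n)
  then show ?case using val_ge_add[of 0 1 "of_nat n"] by (simp add: val_ge_def add.commute)
qed simp

lemma val_ge_power: "val_ge g x \<Longrightarrow> val_ge (nsm n g) (x ^ n)"
  by (induction n) (simp_all add: val_ge_def[of 0] val_ge_mult)

lemma val_add_eq_of_less:
  assumes "x \<noteq> 0" and "val_ge g y" and "v x < g"
  shows "x + y \<noteq> 0" and "v (x + y) = v x"
proof -
  show xy: "x + y \<noteq> 0"
    using assms by (auto simp: val_ge_def add_eq_0_iff2)
  show "v (x + y) = v x"
  proof (cases "y = 0")
    case False
    with assms have "v x < v y" by (simp add: val_ge_def)
    moreover have "min (v x) (v y) \<le> v (x + y)"
      using val_add_min[OF assms(1) False xy] .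
    moreover have "min (v (x + y)) (v y) \<le> v x"
      using val_add_min[OF xy, of "- y"] False assms(1) by simp
    ultimately show ?thesis by (auto simp: min_def split: if_splits)
  qed simp
qed

lemma val_bound_val_ring_mult:
  assumes "c \<in> val_ring K v" and "x = 0 \<or> G \<le> nsm n (v x)"
  shows "c * x = 0 \<or> G \<le> nsm n (v (c * x))"
proof (cases "c = 0 \<or> x = 0")
  case False
  then have "v x \<le> v (c * x)"
    using assms(1) val_mult[of c x] by (simp add: val_ring_def val_int_def)
  then show ?thesis using assms(2) False nsm_mono[of "v x" "v (c * x)" n] by auto
qed auto

lemma val_bound_add:
  assumes "x = 0 \<or> G \<le> nsm n (v x)" and "y = 0 \<or> G \<le> nsm n (v y)"
  shows "x + y = 0 \<or> G \<le> nsm n (v (x + y))"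
proof (cases "x = 0 \<or> y = 0 \<or> x + y = 0")
  case False
  then have "nsm n (min (v x) (v y)) \<le> nsm n (v (x + y))"
    by (simp add: val_add_min nsm_mono)
  then show ?thesis using assms False by (auto simp: min_def split: if_splits)
qed (use assms in auto)

lemma ideal_gen_val_ring_subset:
  assumes K: "subfield K" and "S \<subseteq> {x \<in> K. x = 0 \<or> G \<le> nsm n (v x)}"
  shows "ideal_gen (val_ring K v) S \<subseteq> {x \<in> K. x = 0 \<or> G \<le> nsm n (v x)}" (is "_ \<subseteq> ?T")
proof (rule ideal_gen_subset)
  show "0 \<in> ?T" using K by (simp add: subfield_0)
  show "x + y \<in> ?T" if "x \<in> ?T" and "y \<in> ?T" for x y
    using that K by (simp add: subfield_add val_bound_add)
  show "c * x \<in> ?T" if "c \<in> val_ring K v" and "x \<in> ?T" for c x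
    using that K val_bound_val_ring_mult[OF that(1)] by (auto simp: val_ring_def subfield_mult)
qed fact

lemma best_val_minus_one_eq:
  assumes "best K v p z g" and "best K v p z g'" and "z \<noteq> 0" and "g - 1 \<noteq> 0" and "g' - 1 \<noteq> 0"
  shows "v (g - 1) = v (g' - 1)"
proof -
  have "v (z ^ p / (g - 1)) = v (z ^ p / (g' - 1))"
    using assms(1,2) unfolding best_def by (blast intro: order.antisym)
  then show ?thesis using assms(3-5) by (simp add: val_divide)
qed

end

locale kummer_setting = valued_field v for v :: "'l::field_char_0 \<Rightarrow> 'g::linordered_ab_group_add" +
  fixes p :: nat and \<zeta> :: 'l
  assumes prime_p: "prime p" and residue_char_p: "val_pos v (of_nat p)"
    and primitive_root_zeta: "primitive_root p \<zeta>"
begin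

abbreviation \<zz> :: 'l where "\<zz> \<equiv> \<zeta> - 1"

lemma two_le_p: "2 \<le> p"
  using prime_p prime_ge_2_nat by blast

lemma of_nat_p_nonzero: "(of_nat p :: 'l) \<noteq> 0"
  using two_le_p by simp

lemma val_p_pos: "0 < v (of_nat p)"
  using residue_char_p of_nat_p_nonzero unfolding val_pos_def by simp

lemma val_ge_choose_term:
  assumes "1 \<le> k" and "k < p" and "val_ge g y"
  shows "val_ge (v (of_nat p) + nsm k g) (of_nat (p choose k) * y ^ k)"
proof -
  obtain m where m: "p choose k = p * m"
    using dvd_choose_prime[of k p] assms prime_p by (auto elim: dvdE)
  have "val_ge (v (of_nat p)) (of_nat p * of_nat m)"
    using val_ge_mult[OF val_ge_val val_ge_of_nat, of "of_nat p" m] by simp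
  from val_ge_mult[OF this val_ge_power[OF assms(3)]]
  have "val_ge (v (of_nat p) + nsm k g) (of_nat p * of_nat m * y ^ k)" .
  then show ?thesis by (simp only: m of_nat_mult)
qed

lemma zeta_minus_one_nonzero: "\<zz> \<noteq> 0"
  using primitive_root_zeta two_le_p unfolding primitive_root_def
  by (metis One_nat_def Suc_1 Suc_le_lessD power_one_right right_minus_eq zero_less_one)

lemma val_zeta: "v \<zeta> = 0"
proof -
  have "nsm p (v \<zeta>) = 0"
    using val_power[of \<zeta> p] primitive_root_zeta two_le_p
    by (simp add: primitive_root_nonzero) (simp add: primitive_root_def)
  then show ?thesis using nsm_eq_0_iff[of p "v \<zeta>"] two_le_p by simp
qed

lemma val_ge_zeta_minus_one: "val_ge 0 \<zz>"
  using val_ge_add[of 0 \<zeta> "- 1"] val_zeta by (simp add: val_ge_def)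

lemma zeta_binomial_sum: "(\<Sum>k\<in>{1..p}. of_nat (p choose k) * \<zz> ^ k) = 0"
  using binomial_minus_one[of \<zz> p] primitive_root_zeta unfolding primitive_root_def by simp

text \<open>Both bounds on \<open>v p\<close> come from the relation \<open>\<Sum>\<^sub>k\<^sub>=\<^sub>1\<^sup>p (p choose k) \<zz>\<^sup>k = 0\<close>, by
  isolating the term \<open>k = p\<close> resp. \<open>k = 1\<close>.\<close>
lemma val_p_plus_val_le: "v (of_nat p) + v \<zz> \<le> nsm p (v \<zz>)"
proof -
  let ?T = "\<lambda>k. of_nat (p choose k) * \<zz> ^ k"
  have "{1..p} = insert p {1..<p}" using two_le_p by auto
  then have zp: "\<zz> ^ p = - (\<Sum>k\<in>{1..<p}. ?T k)"
    using zeta_binomial_sum by (simp add: eq_neg_iff_add_eq_0)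
  have "val_ge (v (of_nat p) + v \<zz>) (?T k)" if "k \<in> {1..<p}" for k
  proof (rule val_ge_mono)
    show "val_ge (v (of_nat p) + nsm k (v \<zz>)) (?T k)"
      using val_ge_choose_term[of k "v \<zz>" \<zz>] that by simp
    show "v (of_nat p) + v \<zz> \<le> v (of_nat p) + nsm k (v \<zz>)"
      using nsm_mono_nat[of "v \<zz>" 1 k] val_ge_zeta_minus_one zeta_minus_one_nonzero that
      by (simp add: val_ge_def)
  qed
  then have "val_ge (v (of_nat p) + v \<zz>) (\<zz> ^ p)"
    unfolding zp by (intro val_ge_uminus val_ge_sum)
  then show ?thesis using zeta_minus_one_nonzero by (simp add: val_ge_def val_power)
qed

lemma val_p_le: "v (of_nat p) \<le> nsm (p - 1) (v \<zz>)"
  using val_p_plus_val_le nsm_pred[of p "v \<zz>"] two_le_p by (simp add: add.commute)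

lemma val_zeta_minus_one_pos: "0 < v \<zz>"
proof -
  have "v \<zz> \<noteq> 0"
  proof
    assume "v \<zz> = 0"
    then have "v (of_nat p) \<le> 0" using val_p_le by simp
    with val_p_pos show False by simp
  qed
  then show ?thesis using val_ge_zeta_minus_one zeta_minus_one_nonzero by (simp add: val_ge_def)
qed

lemma nsm_val_le_val_p: "nsm (p - 1) (v \<zz>) \<le> v (of_nat p)"
proof (rule ccontr)
  let ?T = "\<lambda>k. of_nat (p choose k) * \<zz> ^ k"
  let ?P = "v (of_nat p)" and ?c = "v \<zz>"
  assume "\<not> nsm (p - 1) ?c \<le> ?P"
  then have "?P + ?c < nsm p ?c"
    using nsm_pred[of p ?c] two_le_p by (simp add: add.commute)
  moreover have "?P + ?c < ?P + nsm 2 ?c"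
    using val_zeta_minus_one_pos by (simp add: numeral_2_eq_2)
  ultimately have less: "?P + ?c < min (?P + nsm 2 ?c) (nsm p ?c)" by simp
  have "{1..p} = insert 1 {2..p}" using two_le_p by auto
  then have pz: "of_nat p * \<zz> = - (\<Sum>k\<in>{2..p}. ?T k)"
    using zeta_binomial_sum by (simp add: eq_neg_iff_add_eq_0)
  have "val_ge (min (?P + nsm 2 ?c) (nsm p ?c)) (?T k)" if "k \<in> {2..p}" for k
  proof (cases "k = p")
    case True
    then show ?thesis
      using val_ge_mono[OF val_ge_power[OF val_ge_val[of \<zz>], of p] min.cobounded2] by simp
  next
    case False
    have "val_ge (?P + nsm k ?c) (?T k)"
      using val_ge_choose_term[of k ?c \<zz>] that False by simp
    moreover have "?P + nsm 2 ?c \<le> ?P + nsm k ?c"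
      using nsm_mono_nat[of ?c 2 k] val_zeta_minus_one_pos that by simp
    ultimately have "val_ge (?P + nsm 2 ?c) (?T k)" by (rule val_ge_mono)
    then show ?thesis by (rule val_ge_mono) simp
  qed
  then have "val_ge (min (?P + nsm 2 ?c) (nsm p ?c)) (of_nat p * \<zz>)"
    unfolding pz by (intro val_ge_uminus val_ge_sum)
  then have "min (?P + nsm 2 ?c) (nsm p ?c) \<le> ?P + ?c"
    using of_nat_p_nonzero zeta_minus_one_nonzero by (simp add: val_ge_def val_mult)
  with less have "?P + ?c < ?P + ?c" by (rule order.strict_trans2)
  then show False by simp
qed

lemma val_p: "v (of_nat p) = nsm (p - 1) (v \<zz>)"
  using val_p_le nsm_val_le_val_p by (rule order.antisym)

lemma val_ge_binomial_term:
  assumes "1 \<le> k" and "k \<le> p"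
  shows "val_ge (nsm p (v \<zz>)) (of_nat (p choose k) * \<zz> ^ k)"
proof (cases "k = p")
  case True
  then show ?thesis using val_ge_power[OF val_ge_val[of \<zz>], of p] by simp
next
  case False
  have "val_ge (v (of_nat p) + nsm k (v \<zz>)) (of_nat (p choose k) * \<zz> ^ k)"
    using val_ge_choose_term[of k "v \<zz>" \<zz>] assms False by simp
  moreover have "nsm p (v \<zz>) \<le> v (of_nat p) + nsm k (v \<zz>)"
  proof -
    have "v \<zz> \<le> nsm k (v \<zz>)"
      using nsm_mono_nat[of "v \<zz>" 1 k] val_zeta_minus_one_pos assms by simp
    then show ?thesis
      using val_p nsm_pred[of p "v \<zz>"] two_le_p by (simp add: add.commute)
  qed
  ultimately show ?thesis by (rule val_ge_mono)
qed

section \<open>A Hensel step\<close>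

definition kummer_poly :: "'l \<Rightarrow> 'l poly" where
  "kummer_poly h = smult (inverse (\<zz> ^ p)) ([:1, \<zz>:] ^ p - [:h:])"

lemma poly_kummer_poly: "poly (kummer_poly h) b = ((1 + \<zz> * b) ^ p - h) / \<zz> ^ p"
  by (simp add: kummer_poly_def divide_inverse mult.commute)

lemma coeff_kummer_poly:
  "coeff (kummer_poly h) k = (of_nat (p choose k) * \<zz> ^ k - (if k = 0 then h else 0)) / \<zz> ^ p"
proof -
  have "coeff ([:1, \<zz>:] ^ p) k = of_nat (p choose k) * \<zz> ^ k"
  proof (cases "k \<le> p")
    case False
    moreover have "degree ([:1, \<zz>:] ^ p) \<le> p"
      using degree_power_le[of "[:1, \<zz>:]" p] by (simp split: if_splits)
    ultimately show ?thesis by (simp add: coeff_eq_0)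
  qed (simp add: coeff_linear_poly_power)
  then show ?thesis
    by (simp add: kummer_poly_def coeff_pCons divide_inverse mult.commute split: nat.split)
qed

lemma lead_coeff_kummer_poly: "lead_coeff (kummer_poly h) = 1"
proof -
  have "coeff (kummer_poly h) p = 1"
    using two_le_p zeta_minus_one_nonzero by (simp add: coeff_kummer_poly)
  moreover have "degree (kummer_poly h) = p"
  proof (rule order.antisym)
    show "degree (kummer_poly h) \<le> p" by (rule degree_le) (simp add: coeff_kummer_poly)
    show "p \<le> degree (kummer_poly h)" by (rule le_degree) (simp add: calculation)
  qed
  ultimately show ?thesis by simp
qed

lemma divide_zeta_power_in_val_ring:
  assumes K: "subfield K" and "\<zeta> \<in> K" and "x \<in> K" and "val_ge (nsm p (v \<zz>)) x"
  shows "x / \<zz> ^ p \<in> val_ring K v"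
proof -
  have "x / \<zz> ^ p \<in> K" using assms by (simp add: subfield_closed)
  moreover have "0 \<le> v (x / \<zz> ^ p)" if "x \<noteq> 0"
    using that assms(4) zeta_minus_one_nonzero by (simp add: val_ge_def val_divide val_power)
  ultimately show ?thesis by (auto simp: val_ring_def val_int_def)
qed

lemma coeff_kummer_poly_in_val_ring:
  assumes K: "subfield K" and "\<zeta> \<in> K" and "h \<in> K" and close: "val_ge (nsm p (v \<zz>)) (h - 1)"
  shows "coeff (kummer_poly h) k \<in> val_ring K v"
proof -
  let ?x = "of_nat (p choose k) * \<zz> ^ k - (if k = 0 then h else 0)"
  have "?x \<in> K" using assms by (simp add: subfield_closed)
  moreover have "val_ge (nsm p (v \<zz>)) ?x"
  proof (cases "k = 0")
    case True
    then show ?thesis using val_ge_uminus[OF close] by simp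
  next
    case False
    then show ?thesis using val_ge_binomial_term[of k] by (cases "k \<le> p") (simp_all add: binomial_eq_0)
  qed
  ultimately show ?thesis
    using divide_zeta_power_in_val_ring[OF K \<open>\<zeta> \<in> K\<close>] by (simp add: coeff_kummer_poly)
qed

text \<open>Hensel step: if \<open>v (h - 1) > p v \<zz>\<close>, substituting \<open>X = 1 + \<zz> Y\<close> into
  \<open>X\<^sup>p - h\<close> and dividing by \<open>\<zz>\<^sup>p\<close> gives a monic integral polynomial (\<open>kummer_poly h\<close>)
  whose reduction has the simple root \<open>0\<close>, because \<open>v p = (p - 1) v \<zz>\<close>.\<close>
lemma kummer_pth_root:
  assumes K: "subfield K" and hen: "henselian K v" and "\<zeta> \<in> K" and "h \<in> K"
    and close: "nsm p (v \<zz>) < v (h - 1)"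
  shows "\<exists>X\<in>K. X ^ p = h"
proof -
  let ?f = "kummer_poly h"
  have coeffs: "\<forall>i. coeff ?f i \<in> val_ring K v"
    using coeff_kummer_poly_in_val_ring[OF K \<open>\<zeta> \<in> K\<close> \<open>h \<in> K\<close>] close
    by (simp add: val_ge_def less_imp_le)
  have "0 \<in> val_ring K v" using K by (simp add: val_ring_def val_int_def subfield_0)
  moreover have "val_pos v (poly ?f 0)"
  proof -
    have "poly ?f 0 = (1 - h) / \<zz> ^ p" by (simp add: poly_0_coeff_0 coeff_kummer_poly)
    moreover have "v ((1 - h) / \<zz> ^ p) = v (h - 1) - nsm p (v \<zz>)" if "h \<noteq> 1"
      using that zeta_minus_one_nonzero val_minus[of "h - 1"] by (simp add: val_divide val_power)
    ultimately show ?thesis using close by (auto simp: val_pos_def)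
  qed
  moreover have "\<not> val_pos v (poly (pderiv ?f) 0)"
  proof -
    have "poly (pderiv ?f) 0 = of_nat p * \<zz> / \<zz> ^ p"
      by (simp add: poly_0_coeff_0 coeff_pderiv coeff_kummer_poly)
    moreover have "v (of_nat p * \<zz> / \<zz> ^ p) = 0"
      using of_nat_p_nonzero zeta_minus_one_nonzero val_p nsm_pred[of p "v \<zz>"] two_le_p
      by (simp add: val_divide val_mult val_power add.commute)
    ultimately show ?thesis using of_nat_p_nonzero zeta_minus_one_nonzero by (simp add: val_pos_def)
  qed
  ultimately obtain b where b: "b \<in> val_ring K v" and root: "poly ?f b = 0"
    using hen coeffs lead_coeff_kummer_poly unfolding henselian_def by blast
  have "(1 + \<zz> * b) ^ p = h"
    using root zeta_minus_one_nonzero by (simp add: poly_kummer_poly)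
  moreover have "1 + \<zz> * b \<in> K"
    using K \<open>\<zeta> \<in> K\<close> b by (simp add: val_ring_def subfield_closed)
  ultimately show ?thesis by blast
qed

section \<open>Best elements\<close>

lemma frakA_minus_one_nonzero:
  assumes K: "subfield K" and "\<zeta> \<in> K" and deg: "ext_degree_is K p" and "g \<in> frakA K p"
  shows "g - 1 \<noteq> 0"
  using power_notin_frakA[OF K primitive_root_zeta \<open>\<zeta> \<in> K\<close> deg two_le_p subfield_1[OF K]] assms(4)
  by auto

lemma val_power_minus_one:
  assumes "b \<noteq> 0" and "0 \<le> v b" and "v b < v \<zz>"
  shows "(b + 1) ^ p - 1 \<noteq> 0" and "v ((b + 1) ^ p - 1) = nsm p (v b)"
proof -
  let ?T = "\<lambda>k. of_nat (p choose k) * b ^ k"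
  have "{1..p} = insert p {1..<p}" using two_le_p by auto
  then have expand: "(b + 1) ^ p - 1 = b ^ p + (\<Sum>k\<in>{1..<p}. ?T k)"
    by (simp add: binomial_minus_one)
  have "val_ge (v (of_nat p) + v b) (\<Sum>k\<in>{1..<p}. ?T k)"
  proof (rule val_ge_sum)
    fix k assume k: "k \<in> {1..<p}"
    have "val_ge (v (of_nat p) + nsm k (v b)) (?T k)"
      using val_ge_choose_term[of k "v b" b] k by simp
    moreover have "v b \<le> nsm k (v b)"
      using nsm_mono_nat[of "v b" 1 k] assms(2) k by simp
    ultimately show "val_ge (v (of_nat p) + v b) (?T k)" by (auto elim: val_ge_mono)
  qed
  moreover have "v (b ^ p) < v (of_nat p) + v b"
  proof -
    have "nsm (p - 1) (v b) < nsm (p - 1) (v \<zz>)"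
      using nsm_strict_mono[OF assms(3)] two_le_p by simp
    then show ?thesis
      using assms(1) val_p nsm_pred[of p "v b"] two_le_p by (simp add: val_power add.commute)
  qed
  moreover have "b ^ p \<noteq> 0" using assms(1) by simp
  ultimately show "(b + 1) ^ p - 1 \<noteq> 0" and "v ((b + 1) ^ p - 1) = nsm p (v b)"
    unfolding expand using val_add_eq_of_less assms(1) by (simp_all add: val_power)
qed

lemma best_val_minus_one_le:
  assumes K: "subfield K" and hen: "henselian K v" and "\<zeta> \<in> K" and deg: "ext_degree_is K p"
    and h: "best K v p \<zz> h" and a: "a \<in> val_ring K v" and ah: "best K v p \<zz> (a ^ p * h)"
    and "a \<noteq> 1"
  shows "v (h - 1) \<le> nsm p (v (a - 1))"
proof (rule ccontr)
  assume "\<not> v (h - 1) \<le> nsm p (v (a - 1))"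
  then have less: "nsm p (v (a - 1)) < v (h - 1)" by simp
  have hA: "h \<in> frakA K p" and "h \<in> K" using h by (auto simp: best_def frakA_def)
  have "h - 1 \<noteq> 0" and "a ^ p * h - 1 \<noteq> 0"
    using frakA_minus_one_nonzero[OF K \<open>\<zeta> \<in> K\<close> deg] hA ah by (auto simp: best_def)
  then have same: "v (a ^ p * h - 1) = v (h - 1)"
    using best_val_minus_one_eq[OF ah h zeta_minus_one_nonzero] by simp
  have a_int: "val_ge 0 a" using a by (simp add: val_ring_def val_int_def val_ge_def)
  have "0 \<le> v (a - 1)"
    using val_ge_add[OF a_int, of "- 1"] \<open>a \<noteq> 1\<close> by (simp add: val_ge_def)
  show False
  proof (cases "v (a - 1) < v \<zz>")
    case True
    then have "a ^ p - 1 \<noteq> 0" and val_ap: "v (a ^ p - 1) = nsm p (v (a - 1))"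
      using val_power_minus_one[of "a - 1"] \<open>a \<noteq> 1\<close> \<open>0 \<le> v (a - 1)\<close> by simp_all
    have "val_ge (nsm p 0 + v (h - 1)) (a ^ p * (h - 1))"
      by (rule val_ge_mult[OF val_ge_power[OF a_int] val_ge_val])
    then have "v ((a ^ p - 1) + a ^ p * (h - 1)) = nsm p (v (a - 1))"
      using val_add_eq_of_less(2)[OF \<open>a ^ p - 1 \<noteq> 0\<close>] val_ap less by simp
    moreover have "a ^ p * h - 1 = (a ^ p - 1) + a ^ p * (h - 1)" by (simp add: algebra_simps)
    ultimately have "v (a ^ p * h - 1) = nsm p (v (a - 1))" by (simp only:)
    with same less show False by simp
  next
    case False
    then have "nsm p (v \<zz>) \<le> nsm p (v (a - 1))" by (simp add: nsm_mono)
    then have "nsm p (v \<zz>) < v (h - 1)" using less by (rule order.strict_trans1)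
    then obtain X where "X \<in> K" and "X ^ p = h"
      using kummer_pth_root[OF K hen \<open>\<zeta> \<in> K\<close> \<open>h \<in> K\<close>] by blast
    then show False
      using power_notin_frakA[OF K primitive_root_zeta \<open>\<zeta> \<in> K\<close> deg two_le_p] hA by blast
  qed
qed

lemma best_quotient_bound:
  assumes K: "subfield K" and hen: "henselian K v" and "\<zeta> \<in> K" and deg: "ext_degree_is K p"
    and h: "best K v p \<zz> h" and a: "a \<in> val_ring K v" and ah: "best K v p \<zz> (a ^ p * h)"
  defines "s \<equiv> of_nat p * (a - 1) / (h - 1)"
  shows "s \<in> K \<and> (s = 0 \<or> nsm (p - 1) (v (\<zz> ^ p / (h - 1))) \<le> nsm p (v s))"
proof -
  have "h \<in> K" and "h - 1 \<noteq> 0"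
    using h frakA_minus_one_nonzero[OF K \<open>\<zeta> \<in> K\<close> deg] by (auto simp: best_def frakA_def)
  have "a \<in> K" using a by (simp add: val_ring_def)
  have "s = 0 \<or> nsm (p - 1) (v (\<zz> ^ p / (h - 1))) \<le> nsm p (v s)"
  proof (cases "a = 1")
    case False
    have "v s = nsm (p - 1) (v \<zz>) + v (a - 1) - v (h - 1)"
      using False of_nat_p_nonzero \<open>h - 1 \<noteq> 0\<close> val_p by (simp add: s_def val_divide val_mult)
    moreover have "v (\<zz> ^ p / (h - 1)) = nsm p (v \<zz>) - v (h - 1)"
      using zeta_minus_one_nonzero \<open>h - 1 \<noteq> 0\<close> by (simp add: val_divide val_power)
    ultimately show ?thesis
      using nsm_quotient_bound[OF _ best_val_minus_one_le[OF assms(1-7) False]] two_le_p by simp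
  qed (simp add: s_def)
  moreover have "s \<in> K"
    using K \<open>a \<in> K\<close> \<open>h \<in> K\<close> by (simp add: s_def subfield_closed)
  ultimately show ?thesis by blast
qed

end

theorem corollary6p7:
  fixes K :: "'l::field_char_0 set"
    and v :: "'l \<Rightarrow> 'g::linordered_ab_group_add"
    and p :: nat and \<zeta> h :: 'l
  assumes "subfield K"
    and "valuation v"
    and "henselian K v"
    and "prime p"
    and "val_pos v (of_nat p)"
    and "\<zeta> \<in> K" and "primitive_root p \<zeta>"
    and "frakA K p \<noteq> {}"
    and "ext_degree_is K p"
    and "defectless K v p"
    and "best K v p (\<zeta> - 1) h"
  shows "ideal_gen (val_ring K v)
           {of_nat p * (a - 1) / (h - 1) | a. a \<in> val_ring K v \<and> best K v p (\<zeta> - 1) (a ^ p * h)}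
         \<subseteq> {x \<in> K. x = 0 \<or>
               nsm (p - 1) (v ((\<zeta> - 1) ^ p / (h - 1))) \<le> nsm p (v x)}"
proof -
  interpret kummer_setting v p \<zeta>
    using assms by unfold_locales (simp_all add: valued_field_def)
  show ?thesis
    by (rule ideal_gen_val_ring_subset[OF assms(1)])
      (use best_quotient_bound[OF assms(1,3,6,9,11)] in blast)
qed

end
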